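(* Let $X$ be a Banach space, $f:X\to\mathbb{R}\cup\{+\infty\}$ convex and lower semicontinuous, $\bar x\in[f\le0]$ and $q\in(0,1]$. The following conditions are equivalent: (i) there exist $\tau>0$ and a neighbourhood $U$ of $\bar x$ such that $\tau\, d(x,[f\le0])\le f_+^q(x)$ for all $x\in U$; (ii) $\liminf_{x\to\bar x,\ f(x)>0} f^{q-1}(x)\, d(0,\partial f(x))>0$; (iii) $\liminf_{x\to\bar x,\ f(x)>0} d(x,[f\le0])^{q-1}\, d(0,\partial f(x))^q>0$.
   Context: $[f\le0]=\{x: f(x)\le0\}$, $f_+(x)=\max\{f(x),0\}$; for $f(x)\ge0$, $f^q(x):=[f(x)]^q$, $f_+^q(x)=[f_+(x)]^q$. $d(x,A)=\inf_{a\in A}\|x-a\|$, $d(x,\emptyset)=+\infty$. $\partial f(x)$ is the subdifferential of convex analysis ($\emptyset$ if $f(x)=+\infty$); $d(0,\partial f(x))=\inf\{\|x^*\|:x^*\in\partial f(x)\}$ ($+\infty$ if empty). *)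

theory Defs
  imports "HOL-Analysis.Analysis"
begin

text \<open>Extended-valued functions X \<rightarrow> \<real> \<union> {+\<infinity>} are modelled as ereal-valued functions never taking -\<infinity>.\<close>

definition proper_ext :: "('a \<Rightarrow> ereal) \<Rightarrow> bool" where
  "proper_ext f \<longleftrightarrow> (\<forall>x. f x \<noteq> -\<infinity>)"

definition convex_ext :: "('a::real_vector \<Rightarrow> ereal) \<Rightarrow> bool" where
  "convex_ext f \<longleftrightarrow> (\<forall>x y t. 0 \<le> t \<and> t \<le> 1 \<longrightarrow>
      f (t *\<^sub>R x + (1 - t) *\<^sub>R y) \<le> ereal t * f x + ereal (1 - t) * f y)"

definition lsc_ext :: "('a::topological_space \<Rightarrow> ereal) \<Rightarrow> bool" where
  "lsc_ext f \<longleftrightarrow> (\<forall>x. f x \<le> Liminf (at x) f)"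

definition sublevel0 :: "('a \<Rightarrow> ereal) \<Rightarrow> 'a set" where
  "sublevel0 f = {x. f x \<le> 0}"

definition subdiff :: "('a::real_normed_vector \<Rightarrow> ereal) \<Rightarrow> 'a \<Rightarrow> ('a \<Rightarrow>\<^sub>L real) set" where
  "subdiff f x = (if f x = \<infinity> then {} else
     {s. \<forall>y. f x + ereal (blinfun_apply s (y - x)) \<le> f y})"

text \<open>d(0, \<partial>f(x)), equal to +\<infinity> if the subdifferential is empty.\<close>
definition dist0_subdiff :: "('a::real_normed_vector \<Rightarrow> ereal) \<Rightarrow> 'a \<Rightarrow> ereal" where
  "dist0_subdiff f x = (INF s\<in>subdiff f x. ereal (norm s))"

definition fplus_pow :: "('a \<Rightarrow> ereal) \<Rightarrow> real \<Rightarrow> 'a \<Rightarrow> ereal" where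
  "fplus_pow f q x = (if f x = \<infinity> then \<infinity> else ereal (max (real_of_ereal (f x)) 0 powr q))"

definition epow :: "ereal \<Rightarrow> real \<Rightarrow> ereal" where
  "epow t q = (if t = \<infinity> then \<infinity> else ereal (real_of_ereal t powr q))"

text \<open>Quantity in (ii): f^{q-1}(x) d(0,\<partial>f(x)) for f(x) > 0; at points with f(x)=+\<infinity>
  (where \<partial>f(x) = \<emptyset>) the value is +\<infinity>.\<close>
definition slope_ii :: "('a::real_normed_vector \<Rightarrow> ereal) \<Rightarrow> real \<Rightarrow> 'a \<Rightarrow> ereal" where
  "slope_ii f q x = (if f x = \<infinity> then \<infinity> else
      ereal (real_of_ereal (f x) powr (q - 1)) * dist0_subdiff f x)"

definition slope_iii :: "('a::real_normed_vector \<Rightarrow> ereal) \<Rightarrow> real \<Rightarrow> 'a \<Rightarrow> ereal" where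
  "slope_iii f q x = ereal (infdist x (sublevel0 f) powr (q - 1)) * epow (dist0_subdiff f x) q"

end

theory Submission
  imports Defs
begin

text \<open>
If \<open>\<tau> d(x,[f\<le>0]) \<le> f_+^q(x)\<close> near \<open>xbar\<close>, then at a point with \<open>f(x) > 0\<close> the subgradient
inequality tested against points of \<open>[f\<le>0]\<close> gives \<open>f(x) \<le> \<parallel>s\<parallel> d(x,[f\<le>0])\<close> for every
subgradient \<open>s\<close>, so both slope quantities are at least \<open>f^q(x) / d(x,[f\<le>0]) \<ge> \<tau>\<close>.

Conversely, if the error bound fails, pick \<open>x\<close> near \<open>xbar\<close> with \<open>f_+^q(x) < \<eta> d\<close>, where
\<open>d = d(x,[f\<le>0])\<close>, and apply Ekeland's principle to \<open>f_+^q\<close> with constant \<open>k = 2 f^q(x) / d\<close>.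
The resulting point \<open>z\<close> lies within \<open>d/2\<close> of \<open>x\<close>, hence still outside \<open>[f\<le>0]\<close>, and
\<open>f_+^q\<close> decreases from \<open>z\<close> at rate at most \<open>k\<close>. Convexity of \<open>f\<close> and concavity of
\<open>t \<mapsto> t^q\<close> turn this into the global minorant \<open>f(z) - L \<parallel>y - z\<parallel>\<close> of \<open>f\<close> with
\<open>L = (k/q) f(z)^(1-q)\<close>, and Hahn-Banach turns the minorant into a subgradient at \<open>z\<close> of
norm at most \<open>L\<close>. Both slope quantities at \<open>z\<close> are then \<open>O(\<eta>)\<close>.
\<close>

section \<open>Hahn--Banach for sublinear functionals\<close>

text \<open>Linear functionals on subspaces dominated by \<open>p\<close>, encoded by their graphs so that
  extension becomes inclusion.\<close>

definition dominated_linear_graph :: "('a::real_vector \<Rightarrow> real) \<Rightarrow> ('a \<times> real) set \<Rightarrow> bool" where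
  "dominated_linear_graph p G \<longleftrightarrow> (0, 0) \<in> G \<and>
     (\<forall>x a y b. (x, a) \<in> G \<longrightarrow> (y, b) \<in> G \<longrightarrow> (x + y, a + b) \<in> G) \<and>
     (\<forall>x a c. (x, a) \<in> G \<longrightarrow> (c *\<^sub>R x, c * a) \<in> G) \<and>
     (\<forall>x a b. (x, a) \<in> G \<longrightarrow> (x, b) \<in> G \<longrightarrow> a = b) \<and>
     (\<forall>x a. (x, a) \<in> G \<longrightarrow> a \<le> p x)"

lemma dominated_linear_graph_Union:
  assumes "C \<noteq> {}" and graphs: "\<And>G. G \<in> C \<Longrightarrow> dominated_linear_graph p G"
    and chain: "\<And>G H. G \<in> C \<Longrightarrow> H \<in> C \<Longrightarrow> G \<subseteq> H \<or> H \<subseteq> G"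
  shows "dominated_linear_graph p (\<Union>C)"
proof -
  have common: "\<exists>G\<in>C. u \<in> G \<and> v \<in> G" if "u \<in> \<Union>C" "v \<in> \<Union>C" for u v
    using that chain by blast
  show ?thesis
    unfolding dominated_linear_graph_def
  proof (intro conjI allI impI)
    show "(0, 0) \<in> \<Union>C"
      using \<open>C \<noteq> {}\<close> graphs unfolding dominated_linear_graph_def by blast
  next
    fix x a y b assume "(x, a) \<in> \<Union>C" "(y, b) \<in> \<Union>C"
    with common obtain G where "G \<in> C" "(x, a) \<in> G" "(y, b) \<in> G" by blast
    with graphs show "(x + y, a + b) \<in> \<Union>C" unfolding dominated_linear_graph_def by blast
  next
    fix x a c assume "(x, a) \<in> \<Union>C"
    with graphs show "(c *\<^sub>R x, c * a) \<in> \<Union>C" unfolding dominated_linear_graph_def by blast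
  next
    fix x a b assume "(x, a) \<in> \<Union>C" "(x, b) \<in> \<Union>C"
    with common obtain G where "G \<in> C" "(x, a) \<in> G" "(x, b) \<in> G" by blast
    with graphs show "a = b" unfolding dominated_linear_graph_def by blast
  next
    fix x a assume "(x, a) \<in> \<Union>C"
    with graphs show "a \<le> p x" unfolding dominated_linear_graph_def by blast
  qed
qed

lemma exists_maximal_dominated_linear_graph:
  assumes "0 \<le> p 0"
  shows "\<exists>M. dominated_linear_graph p M \<and> (\<forall>G. dominated_linear_graph p G \<longrightarrow> M \<subseteq> G \<longrightarrow> G = M)"
proof -
  let ?A = "{G. dominated_linear_graph p G}"
  have "\<exists>M\<in>?A. \<forall>G\<in>?A. M \<subseteq> G \<longrightarrow> G = M"
  proof (rule Zorn_Lemma2, intro ballI)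
    fix C assume C: "C \<in> chains ?A"
    show "\<exists>U\<in>?A. \<forall>G\<in>C. G \<subseteq> U"
    proof (cases "C = {}")
      case True
      have "dominated_linear_graph p {(0, 0)}"
        using assms unfolding dominated_linear_graph_def by auto
      with True show ?thesis by blast
    next
      case False
      with C have "dominated_linear_graph p (\<Union>C)"
        by (intro dominated_linear_graph_Union) (auto dest: chainsD chainsD2)
      then show ?thesis by blast
    qed
  qed
  then show ?thesis by blast
qed

lemma dominated_linear_graph_adjoin_le:
  assumes hom: "\<And>c x. 0 < c \<Longrightarrow> p (c *\<^sub>R x) = c * p x"
    and G: "dominated_linear_graph p G" and in_G: "(x, a) \<in> G"
    and lower: "\<And>x a. (x, a) \<in> G \<Longrightarrow> a - p (x - x0) \<le> c"
    and upper: "\<And>x a. (x, a) \<in> G \<Longrightarrow> c \<le> p (x + x0) - a"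
  shows "a + t * c \<le> p (x + t *\<^sub>R x0)"
proof -
  have scaled: "(r *\<^sub>R x, r * a) \<in> G" for r using G in_G unfolding dominated_linear_graph_def by blast
  consider "t = 0" | "t > 0" | "t < 0" by linarith
  then show ?thesis
  proof cases
    case 1
    then show ?thesis using G in_G unfolding dominated_linear_graph_def by simp
  next
    case 2
    have "c \<le> p ((1 / t) *\<^sub>R x + x0) - (1 / t) * a" using upper[OF scaled] .
    then have "a + t * c \<le> t * p ((1 / t) *\<^sub>R x + x0)" using 2 by (simp add: field_simps)
    also have "\<dots> = p (t *\<^sub>R ((1 / t) *\<^sub>R x + x0))" using hom[OF 2] by simp
    also have "t *\<^sub>R ((1 / t) *\<^sub>R x + x0) = x + t *\<^sub>R x0" using 2 by (simp add: scaleR_add_right)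
    finally show ?thesis .
  next
    case 3
    have "(1 / - t) * a - p ((1 / - t) *\<^sub>R x - x0) \<le> c" using lower[OF scaled] .
    then have "a + t * c \<le> (- t) * p ((1 / - t) *\<^sub>R x - x0)" using 3 by (simp add: field_simps)
    also have "\<dots> = p ((- t) *\<^sub>R ((1 / - t) *\<^sub>R x - x0))" using 3 by (intro hom[symmetric]) simp
    also have "(- t) *\<^sub>R ((1 / - t) *\<^sub>R x - x0) = x + t *\<^sub>R x0" using 3 by (simp add: scaleR_diff_right)
    finally show ?thesis .
  qed
qed

lemma dominated_linear_graph_adjoin:
  assumes hom: "\<And>c x. 0 < c \<Longrightarrow> p (c *\<^sub>R x) = c * p x"
    and G: "dominated_linear_graph p G" and x0: "x0 \<notin> Domain G"
    and lower: "\<And>x a. (x, a) \<in> G \<Longrightarrow> a - p (x - x0) \<le> c"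
    and upper: "\<And>x a. (x, a) \<in> G \<Longrightarrow> c \<le> p (x + x0) - a"
  shows "dominated_linear_graph p {(x + t *\<^sub>R x0, a + t * c) | x a t. (x, a) \<in> G}"
    (is "dominated_linear_graph p ?H")
proof -
  have G0: "(0, 0) \<in> G"
    and Gadd: "\<And>x a y b. (x, a) \<in> G \<Longrightarrow> (y, b) \<in> G \<Longrightarrow> (x + y, a + b) \<in> G"
    and Gscale: "\<And>x a c. (x, a) \<in> G \<Longrightarrow> (c *\<^sub>R x, c * a) \<in> G"
    and Gfun: "\<And>x a b. (x, a) \<in> G \<Longrightarrow> (x, b) \<in> G \<Longrightarrow> a = b"
    using G unfolding dominated_linear_graph_def by blast+
  show ?thesis
    unfolding dominated_linear_graph_def
  proof (intro conjI allI impI)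
    show "(0, 0) \<in> ?H" using G0 by force
  next
    fix x a y b assume "(x, a) \<in> ?H" "(y, b) \<in> ?H"
    then obtain x1 a1 t1 x2 a2 t2 where "(x1, a1) \<in> G" "(x2, a2) \<in> G"
      "x = x1 + t1 *\<^sub>R x0" "a = a1 + t1 * c" "y = x2 + t2 *\<^sub>R x0" "b = a2 + t2 * c"
      by blast
    then show "(x + y, a + b) \<in> ?H"
      by (intro CollectI exI[of _ "x1 + x2"] exI[of _ "a1 + a2"] exI[of _ "t1 + t2"])
         (auto simp: algebra_simps intro: Gadd)
  next
    fix x a r assume "(x, a) \<in> ?H"
    then obtain x1 a1 t where "(x1, a1) \<in> G" "x = x1 + t *\<^sub>R x0" "a = a1 + t * c" by blast
    moreover have "(r *\<^sub>R x, r * a) = (r *\<^sub>R x1 + (r * t) *\<^sub>R x0, r * a1 + (r * t) * c)"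
      using \<open>x = x1 + t *\<^sub>R x0\<close> \<open>a = a1 + t * c\<close> by (simp add: algebra_simps)
    ultimately show "(r *\<^sub>R x, r * a) \<in> ?H" using Gscale by blast
  next
    fix x a b assume "(x, a) \<in> ?H" "(x, b) \<in> ?H"
    then obtain x1 a1 t1 x2 a2 t2 where in_G: "(x1, a1) \<in> G" "(x2, a2) \<in> G"
      and x: "x = x1 + t1 *\<^sub>R x0" "x = x2 + t2 *\<^sub>R x0" and "a = a1 + t1 * c" "b = a2 + t2 * c"
      by blast
    have "t1 = t2"
    proof (rule ccontr)
      assume "t1 \<noteq> t2"
      have "(x2 - x1, a2 - a1) \<in> G" using Gadd[OF in_G(2) Gscale[OF in_G(1), of "-1"]] by simp
      then have "((1 / (t1 - t2)) *\<^sub>R (x2 - x1), (1 / (t1 - t2)) * (a2 - a1)) \<in> G"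
        by (rule Gscale)
      moreover have "x2 - x1 = (t1 - t2) *\<^sub>R x0" using x by (simp add: algebra_simps)
      ultimately have "x0 \<in> Domain G" using \<open>t1 \<noteq> t2\<close> by auto
      with x0 show False ..
    qed
    with x in_G Gfun have "a1 = a2" by auto
    with \<open>t1 = t2\<close> show "a = b" using \<open>a = a1 + t1 * c\<close> \<open>b = a2 + t2 * c\<close> by simp
  next
    fix x a assume "(x, a) \<in> ?H"
    then show "a \<le> p x" using dominated_linear_graph_adjoin_le[OF hom G _ lower upper] by blast
  qed
qed

lemma maximal_dominated_linear_graph_total:
  assumes sub: "\<And>x y. p (x + y) \<le> p x + p y"
    and hom: "\<And>c x. 0 < c \<Longrightarrow> p (c *\<^sub>R x) = c * p x"
    and M: "dominated_linear_graph p M"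
    and maximal: "\<And>G. dominated_linear_graph p G \<Longrightarrow> M \<subseteq> G \<Longrightarrow> G = M"
  shows "x0 \<in> Domain M"
proof (rule ccontr)
  assume x0: "x0 \<notin> Domain M"
  have M0: "(0, 0) \<in> M"
    and Madd: "\<And>x a y b. (x, a) \<in> M \<Longrightarrow> (y, b) \<in> M \<Longrightarrow> (x + y, a + b) \<in> M"
    and Mle: "\<And>x a. (x, a) \<in> M \<Longrightarrow> a \<le> p x"
    using M unfolding dominated_linear_graph_def by blast+
  have gap: "a - p (x - x0) \<le> p (y + x0) - b" if "(x, a) \<in> M" "(y, b) \<in> M" for x a y b
  proof -
    have "a + b \<le> p ((x - x0) + (y + x0))" using Madd[OF that] Mle by simp
    then show ?thesis using sub[of "x - x0" "y + x0"] by simp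
  qed
  define c where "c = Sup {a - p (x - x0) | x a. (x, a) \<in> M}"
  have bdd: "bdd_above {a - p (x - x0) | x a. (x, a) \<in> M}"
    using gap[OF _ M0] by (auto intro!: bdd_aboveI)
  have lower: "a - p (x - x0) \<le> c" if "(x, a) \<in> M" for x a
    unfolding c_def using that by (intro cSup_upper[OF _ bdd]) auto
  have upper: "c \<le> p (y + x0) - b" if "(y, b) \<in> M" for y b
    unfolding c_def using M0 that gap by (intro cSup_least) auto
  let ?H = "{(x + t *\<^sub>R x0, a + t * c) | x a t. (x, a) \<in> M}"
  have "dominated_linear_graph p ?H"
    using hom M x0 lower upper by (rule dominated_linear_graph_adjoin)
  moreover have "M \<subseteq> ?H" by force
  ultimately have "?H = M" by (rule maximal)
  moreover have "(x0, c) \<in> ?H" using M0 by force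
  ultimately show False using x0 by blast
qed

lemma hahn_banach_sublinear:
  fixes p :: "'a::real_vector \<Rightarrow> real"
  assumes sub: "\<And>x y. p (x + y) \<le> p x + p y"
    and hom: "\<And>c x. 0 < c \<Longrightarrow> p (c *\<^sub>R x) = c * p x"
  shows "\<exists>s. linear s \<and> (\<forall>x. s x \<le> p x)"
proof -
  have "p 0 = 0" using hom[of 2 0] by simp
  then obtain M where M: "dominated_linear_graph p M"
    and maximal: "\<And>G. dominated_linear_graph p G \<Longrightarrow> M \<subseteq> G \<Longrightarrow> G = M"
    using exists_maximal_dominated_linear_graph[of p] by auto
  have Madd: "\<And>x a y b. (x, a) \<in> M \<Longrightarrow> (y, b) \<in> M \<Longrightarrow> (x + y, a + b) \<in> M"
    and Mscale: "\<And>x a c. (x, a) \<in> M \<Longrightarrow> (c *\<^sub>R x, c * a) \<in> M"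
    and Mfun: "\<And>x a b. (x, a) \<in> M \<Longrightarrow> (x, b) \<in> M \<Longrightarrow> a = b"
    and Mle: "\<And>x a. (x, a) \<in> M \<Longrightarrow> a \<le> p x"
    using M unfolding dominated_linear_graph_def by blast+
  define s where "s x = (THE a. (x, a) \<in> M)" for x
  have graph_s: "(x, s x) \<in> M" for x
    using maximal_dominated_linear_graph_total[OF sub hom M maximal, of x] Mfun
    unfolding s_def by (auto intro: theI)
  have "linear s"
  proof
    show "s (x + y) = s x + s y" for x y using Madd[OF graph_s graph_s] graph_s Mfun by blast
    show "s (c *\<^sub>R x) = c *\<^sub>R s x" for c x using Mfun[OF graph_s Mscale[OF graph_s]] by simp
  qed
  moreover have "s x \<le> p x" for x using graph_s Mle by blast
  ultimately show ?thesis by blast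
qed

section \<open>Ekeland's variational principle\<close>

lemma closed_sublevel_add_continuous:
  fixes g h :: "'a::topological_space \<Rightarrow> real"
  assumes g: "\<And>c. closed {x. g x \<le> c}" and h: "continuous_on UNIV h"
  shows "closed {x. g x + h x \<le> c}"
proof -
  have "{x. g x + h x \<le> c} = (\<Inter>t. {x. h x \<le> t} \<union> {x. g x \<le> c - t})"
  proof (intro set_eqI iffI)
    fix x assume "x \<in> (\<Inter>t. {x. h x \<le> t} \<union> {x. g x \<le> c - t})"
    then have alt: "h x \<le> t \<or> g x \<le> c - t" for t by blast
    have "t \<le> c - g x" if "t < h x" for t using alt[of t] that by linarith
    then have "h x \<le> c - g x" by (rule dense_le)
    then show "x \<in> {x. g x + h x \<le> c}" by simp
  next
    fix x assume "x \<in> {x. g x + h x \<le> c}"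
    then have "h x \<le> t \<or> g x \<le> c - t" for t by (cases "h x \<le> t") auto
    then show "x \<in> (\<Inter>t. {x. h x \<le> t} \<union> {x. g x \<le> c - t})" by blast
  qed
  moreover have "closed ({x. h x \<le> t} \<union> {x. g x \<le> c - t})" for t
    using closed_Collect_le[OF h continuous_on_const] g by (rule closed_Un)
  ultimately show ?thesis by (simp add: closed_INT)
qed

definition ekeland_set :: "('a::metric_space \<Rightarrow> real) \<Rightarrow> real \<Rightarrow> 'a \<Rightarrow> 'a set" where
  "ekeland_set g k w = {y. g y + k * dist y w \<le> g w}"

lemma ekeland_set_refl: "w \<in> ekeland_set g k w"
  by (simp add: ekeland_set_def)

lemma ekeland_set_trans:
  assumes "0 \<le> k" and "y \<in> ekeland_set g k v" and "v \<in> ekeland_set g k w"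
  shows "y \<in> ekeland_set g k w"
proof -
  have "k * dist y w \<le> k * dist y v + k * dist v w"
    using mult_left_mono[OF dist_triangle[of y w v] assms(1)] by (simp add: distrib_left)
  with assms(2,3) show ?thesis unfolding ekeland_set_def by simp
qed

lemma closed_ekeland_set:
  assumes "\<And>c. closed {x. g x \<le> c}"
  shows "closed (ekeland_set g k w)"
proof -
  have "continuous_on UNIV (\<lambda>y. k * dist y w)" by (intro continuous_intros)
  with assms show ?thesis unfolding ekeland_set_def by (rule closed_sublevel_add_continuous)
qed

lemma ekeland_sequence:
  fixes g :: "'a::metric_space \<Rightarrow> real"
  assumes bdd: "bdd_below (range g)" and k: "0 \<le> k"
  obtains xs where "xs 0 = x" and "\<And>n. xs (Suc n) \<in> ekeland_set g k (xs n)"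
    and "\<And>n y. y \<in> ekeland_set g k (xs (Suc n)) \<Longrightarrow> k * dist y (xs (Suc n)) \<le> (1/2)^n"
proof -
  let ?E = "ekeland_set g k"
  define next_pt where "next_pt n w = (SOME y. y \<in> ?E w \<and> g y \<le> Inf (g ` ?E w) + (1/2)^n)" for n w
  have "next_pt n w \<in> ?E w \<and> g (next_pt n w) \<le> Inf (g ` ?E w) + (1/2)^n" for n w
  proof -
    have "Inf (g ` ?E w) < Inf (g ` ?E w) + (1/2)^n" by simp
    then obtain v where "v \<in> g ` ?E w" "v < Inf (g ` ?E w) + (1/2)^n"
      using cInf_lessD[of "g ` ?E w"] ekeland_set_refl by blast
    then have "\<exists>y. y \<in> ?E w \<and> g y \<le> Inf (g ` ?E w) + (1/2)^n" by force
    then show ?thesis unfolding next_pt_def by (rule someI_ex)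
  qed
  then have next_pt: "next_pt n w \<in> ?E w"
    and next_pt_inf: "g (next_pt n w) \<le> Inf (g ` ?E w) + (1/2)^n" for n w by simp_all
  define xs where "xs = rec_nat x next_pt"
  have xs_0: "xs 0 = x" and xs_Suc: "xs (Suc n) = next_pt n (xs n)" for n
    unfolding xs_def by simp_all
  have small: "k * dist y (xs (Suc n)) \<le> (1/2)^n" if y: "y \<in> ?E (xs (Suc n))" for y n
  proof -
    have "y \<in> ?E (xs n)" using ekeland_set_trans[OF k y] next_pt xs_Suc by simp
    moreover have "bdd_below (g ` ?E (xs n))" using bdd by (rule bdd_below_mono) auto
    ultimately have "Inf (g ` ?E (xs n)) \<le> g y" by (simp add: cInf_lower)
    then have "g (xs (Suc n)) \<le> g y + (1/2)^n" using next_pt_inf[of n "xs n"] xs_Suc by simp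
    with y show ?thesis unfolding ekeland_set_def by simp
  qed
  show ?thesis by (rule that[OF xs_0 _ small]) (simp add: xs_Suc next_pt)
qed

lemma ekeland_variational_principle:
  fixes g :: "'a::complete_space \<Rightarrow> real"
  assumes lsc: "\<And>c. closed {x. g x \<le> c}" and bdd: "bdd_below (range g)" and k: "0 < k"
  shows "\<exists>z. g z + k * dist z x \<le> g x \<and> (\<forall>y. g z \<le> g y + k * dist y z)"
proof -
  let ?E = "ekeland_set g k"
  obtain xs where xs_0: "xs 0 = x" and xs_Suc: "\<And>n. xs (Suc n) \<in> ?E (xs n)"
    and small: "\<And>n y. y \<in> ?E (xs (Suc n)) \<Longrightarrow> k * dist y (xs (Suc n)) \<le> (1/2)^n"
    using ekeland_sequence[OF bdd less_imp_le[OF k]] by blast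
  have nested: "?E (xs n) \<subseteq> ?E (xs m)" if "m \<le> n" for m n
    using that
  proof (induction n rule: dec_induct)
    case (step n)
    have "?E (xs (Suc n)) \<subseteq> ?E (xs n)" using ekeland_set_trans[OF less_imp_le[OF k] _ xs_Suc] by blast
    with step.IH show ?case by blast
  qed simp
  have shrinking: "\<exists>n. \<forall>x\<in>?E (xs n). \<forall>y\<in>?E (xs n). dist x y < e" if "0 < e" for e
  proof -
    obtain N where N: "(1/2::real)^N < k * e / 2"
      using real_arch_pow_inv[of "k * e / 2" "1/2"] k \<open>0 < e\<close> by auto
    have "dist x y < e" if "x \<in> ?E (xs (Suc N))" "y \<in> ?E (xs (Suc N))" for x y
    proof -
      have "k * dist x y \<le> k * dist x (xs (Suc N)) + k * dist y (xs (Suc N))"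
        using dist_triangle2[of x y "xs (Suc N)"] k by (simp add: distrib_left[symmetric])
      also have "\<dots> < k * e" using small[OF that(1)] small[OF that(2)] N by simp
      finally show ?thesis using k by simp
    qed
    then show ?thesis by blast
  qed
  have "?E (xs n) \<noteq> {}" for n using ekeland_set_refl by blast
  then obtain z where z: "(\<Inter>n. ?E (xs n)) = {z}"
    using decreasing_closed_nest_sing[of "\<lambda>n. ?E (xs n)", OF closed_ekeland_set[OF lsc] _ nested shrinking]
    by blast
  have "g z + k * dist z x \<le> g x" using z xs_0 unfolding ekeland_set_def by blast
  moreover have "g z \<le> g y + k * dist y z" for y
  proof (rule ccontr)
    assume "\<not> g z \<le> g y + k * dist y z"
    then have "y \<in> ?E z" unfolding ekeland_set_def by simp
    then have "y \<in> (\<Inter>n. ?E (xs n))" using z ekeland_set_trans[OF less_imp_le[OF k]] by blast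
    then have "y = z" using z by blast
    with \<open>\<not> g z \<le> g y + k * dist y z\<close> show False by simp
  qed
  ultimately show ?thesis by blast
qed

lemma ekeland_variational_principle_ereal:
  fixes F :: "'a::complete_space \<Rightarrow> ereal"
  assumes lsc: "\<And>c. closed {x. F x \<le> ereal c}" and bdd: "\<And>x. ereal m \<le> F x"
    and k: "0 < k" and finite: "F x \<noteq> \<infinity>"
  shows "\<exists>z. F z + ereal (k * dist z x) \<le> F x \<and> (\<forall>y. F z \<le> F y + ereal (k * dist y z))"
proof -
  define M where "M = real_of_ereal (F x) + 1"
  have F_x: "F x = ereal (M - 1)"
    using finite bdd[of x] unfolding M_def by (cases "F x") auto
  define g where "g x = real_of_ereal (min (ereal M) (F x))" for x
  have g: "ereal (g x) = min (ereal M) (F x)" for x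
    using bdd[of x] unfolding g_def by (cases "F x") (auto simp: min_def)
  have g_le_iff: "g x \<le> c \<longleftrightarrow> M \<le> c \<or> F x \<le> ereal c" for x c
  proof -
    have "g x \<le> c \<longleftrightarrow> min (ereal M) (F x) \<le> ereal c" by (simp flip: g)
    then show ?thesis by (simp add: min_le_iff_disj)
  qed
  have "closed {x. g x \<le> c}" for c
  proof (cases "M \<le> c")
    case False
    then have "{x. g x \<le> c} = {x. F x \<le> ereal c}" by (simp add: g_le_iff)
    then show ?thesis using lsc by simp
  qed (simp add: g_le_iff)
  moreover have "bdd_below (range g)"
  proof (rule bdd_belowI)
    fix y assume "y \<in> range g"
    then obtain x where "y = g x" by blast
    have "ereal (min M m) \<le> ereal (g x)" unfolding g using bdd[of x] by (simp add: min.coboundedI2)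
    then show "min M m \<le> y" using \<open>y = g x\<close> by (cases "M \<le> m") (auto simp: min_def)
  qed
  ultimately obtain z where z_x: "g z + k * dist z x \<le> g x"
    and z_min: "\<And>y. g z \<le> g y + k * dist y z"
    using ekeland_variational_principle[of g k x] k by blast
  have g_x: "g x = M - 1" using g[of x] F_x by simp
  have "0 \<le> k * dist z x" using k by simp
  then have "g z < M" using z_x g_x by linarith
  then have F_z: "F z = ereal (g z)" using g[of z] by (auto simp: min_def split: if_splits)
  have "F z + ereal (k * dist z x) \<le> F x"
    using z_x F_z F_x g_x by simp
  moreover have "F z \<le> F y + ereal (k * dist y z)" for y
  proof -
    have "ereal (g z) \<le> ereal (g y) + ereal (k * dist y z)" using z_min[of y] by simp
    moreover have "ereal (g y) \<le> F y" using g[of y] by simp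
    ultimately show ?thesis using F_z by (metis add_right_mono order_trans)
  qed
  ultimately show ?thesis by blast
qed

section \<open>Extended-valued convex functions\<close>

lemma proper_ext_finiteE:
  assumes "proper_ext f" and "f x \<noteq> \<infinity>"
  obtains r where "f x = ereal r"
  using assms unfolding proper_ext_def by (cases "f x") auto

lemma convex_ext_le_combination:
  assumes "convex_ext f" and "f x = ereal a" and "f y = ereal b" and "0 \<le> t" and "t \<le> 1"
  shows "f (t *\<^sub>R x + (1 - t) *\<^sub>R y) \<le> ereal (t * a + (1 - t) * b)"
  using assms unfolding convex_ext_def by (metis times_ereal.simps(1) plus_ereal.simps(1))

lemma closed_sublevel_lsc:
  fixes f :: "'a::topological_space \<Rightarrow> ereal"
  assumes "lsc_ext f"
  shows "closed {x. f x \<le> c}"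
  unfolding closed_def
proof (rule Topological_Spaces.openI)
  fix x assume "x \<in> - {x. f x \<le> c}"
  then have "c < f x" by simp
  moreover have "f x \<le> Liminf (at x) f" using assms unfolding lsc_ext_def by blast
  ultimately have "eventually (\<lambda>y. c < f y) (at x)" by (intro less_LiminfD) simp
  with \<open>c < f x\<close> have "eventually (\<lambda>y. c < f y) (nhds x)" by (simp add: eventually_nhds_conv_at)
  then obtain T where "open T" "x \<in> T" "\<forall>y\<in>T. c < f y" unfolding eventually_nhds by blast
  moreover have "T \<subseteq> - {x. f x \<le> c}" using \<open>\<forall>y\<in>T. c < f y\<close> by (auto simp: not_le)
  ultimately show "\<exists>T. open T \<and> x \<in> T \<and> T \<subseteq> - {x. f x \<le> c}" by blast
qed

lemma powr_le_powr_iff: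
  fixes x y a :: real
  assumes "0 \<le> x" and "0 \<le> y" and "0 < a"
  shows "x powr a \<le> y powr a \<longleftrightarrow> x \<le> y"
  using assms by (meson not_le powr_less_mono2 powr_mono2 less_imp_le)

lemma closed_sublevel_fplus_pow:
  assumes "lsc_ext f" and "0 < q"
  shows "closed {x. fplus_pow f q x \<le> ereal c}"
proof (cases "c < 0")
  case True
  then have "{x. fplus_pow f q x \<le> ereal c} = {}"
    by (auto simp: fplus_pow_def) (smt (verit) powr_ge_zero)
  then show ?thesis by simp
next
  case False
  have root: "max r 0 powr q \<le> c \<longleftrightarrow> r \<le> c powr (1 / q)" for r
  proof -
    have "c = (c powr (1 / q)) powr q" using False \<open>0 < q\<close> by (simp add: powr_powr)
    then have "max r 0 powr q \<le> c \<longleftrightarrow> max r 0 \<le> c powr (1 / q)"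
      using \<open>0 < q\<close> by (metis powr_le_powr_iff max.cobounded2 powr_ge_zero)
    then show ?thesis by simp
  qed
  have "fplus_pow f q x \<le> ereal c \<longleftrightarrow> f x \<le> ereal (c powr (1 / q))" for x
    using False by (cases "f x") (simp_all add: fplus_pow_def root)
  with closed_sublevel_lsc[OF assms(1)] show ?thesis by simp
qed

lemma weighted_am_gm_powr:
  fixes y b q :: real
  assumes "0 \<le> y" and "0 < b" and "0 \<le> q" and "q \<le> 1"
  shows "y powr q * b powr (1 - q) \<le> q * y + (1 - q) * b"
proof (cases "y = 0")
  case False
  then show ?thesis using Youngs_inequality_0[of q "1 - q" y b] assms by simp
qed (use assms in simp)

lemma fplus_pow_le:
  assumes "proper_ext f" and "f x \<le> ereal u" and "0 \<le> u" and "0 < q"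
  shows "fplus_pow f q x \<le> ereal (u powr q)"
proof -
  have "f x \<noteq> \<infinity>" using assms(2) by auto
  then obtain r where r: "f x = ereal r" using proper_ext_finiteE[OF assms(1)] by blast
  then have "max r 0 powr q \<le> u powr q" using assms(2-4) by (intro powr_mono2) auto
  then show ?thesis by (simp add: fplus_pow_def r)
qed

lemma powr_pred_mult_divide_powr:
  fixes x c q :: real
  assumes "0 < x" and "0 \<le> c"
  shows "x powr (q - 1) * (c / x) powr q = c powr q / x"
  using assms by (simp add: powr_diff powr_divide)

locale lipschitz_minorized =
  fixes f :: "'a::real_normed_vector \<Rightarrow> ereal" and z :: 'a and L :: real
  assumes proper: "proper_ext f" and convex: "convex_ext f" and finite_at: "f z \<noteq> \<infinity>"
    and L_nonneg: "0 \<le> L" and minorant: "\<And>y. f z - ereal (L * norm (y - z)) \<le> f y"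
begin

definition fz :: real where "fz = real_of_ereal (f z)"

definition diff_quot :: "real \<Rightarrow> 'a \<Rightarrow> real" where
  "diff_quot t w = (real_of_ereal (f (z + t *\<^sub>R w)) - fz) / t"

definition finite_steps :: "(real \<times> 'a) set" where
  "finite_steps = {(t, w). 0 < t \<and> f (z + t *\<^sub>R w) \<noteq> \<infinity>}"

text \<open>The infimal convolution of the directional derivative of \<open>f\<close> at \<open>z\<close> with \<open>L \<parallel>\<cdot>\<parallel>\<close>.\<close>

definition envelope :: "'a \<Rightarrow> real" where
  "envelope v = (INF (t, w)\<in>finite_steps. diff_quot t w + L * norm (v - w))"

lemma f_z: "f z = ereal fz"
  using proper_ext_finiteE[OF proper finite_at] unfolding fz_def by force

lemma diff_quot_lower:
  assumes "(t, w) \<in> finite_steps"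
  shows "- L * norm w \<le> diff_quot t w"
proof -
  from assms have t: "0 < t" and fin: "f (z + t *\<^sub>R w) \<noteq> \<infinity>" by (auto simp: finite_steps_def)
  obtain a where a: "f (z + t *\<^sub>R w) = ereal a" using proper_ext_finiteE[OF proper fin] .
  have "f z - ereal (L * (t * norm w)) \<le> f (z + t *\<^sub>R w)" using minorant[of "z + t *\<^sub>R w"] t by simp
  then have "fz - L * (t * norm w) \<le> a" by (simp add: f_z a)
  then show ?thesis using t a unfolding diff_quot_def by (simp add: field_simps)
qed

lemma envelope_term_lower:
  assumes "(t, w) \<in> finite_steps"
  shows "- L * norm v \<le> diff_quot t w + L * norm (v - w)"
proof -
  have "L * norm w \<le> L * norm v + L * norm (v - w)"
    using norm_triangle_sub[of w v] L_nonneg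
    by (simp add: norm_minus_commute mult_left_mono flip: distrib_left)
  with diff_quot_lower[OF assms] show ?thesis by simp
qed

lemma unit_step: "f (z + v) \<noteq> \<infinity> \<Longrightarrow> (1, v) \<in> finite_steps"
  by (simp add: finite_steps_def)

lemma envelope_le:
  assumes "(t, w) \<in> finite_steps"
  shows "envelope v \<le> diff_quot t w + L * norm (v - w)"
  unfolding envelope_def using envelope_term_lower
  by (intro cINF_lower2[OF _ assms]) (auto intro!: bdd_belowI2[where m = "- L * norm v"])

lemma envelope_ge:
  assumes "\<And>t w. (t, w) \<in> finite_steps \<Longrightarrow> e \<le> diff_quot t w + L * norm (v - w)"
  shows "e \<le> envelope v"
  unfolding envelope_def using unit_step[of 0] finite_at assms by (intro cINF_greatest) auto

lemma envelope_upper: "envelope v \<le> L * norm v"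
  using envelope_le[OF unit_step[of 0], of v] finite_at by (simp add: diff_quot_def f_z)

lemma envelope_le_f:
  assumes "f (z + v) \<noteq> \<infinity>"
  shows "envelope v \<le> real_of_ereal (f (z + v)) - fz"
  using envelope_le[OF unit_step[OF assms], of v] by (simp add: diff_quot_def)

lemma envelope_scale_le:
  assumes c: "0 < c"
  shows "envelope (c *\<^sub>R v) \<le> c * envelope v"
proof -
  have "envelope (c *\<^sub>R v) / c \<le> diff_quot t w + L * norm (v - w)" if tw: "(t, w) \<in> finite_steps" for t w
  proof -
    have "(t / c, c *\<^sub>R w) \<in> finite_steps" using tw c by (simp add: finite_steps_def)
    then have "envelope (c *\<^sub>R v) \<le> diff_quot (t / c) (c *\<^sub>R w) + L * norm (c *\<^sub>R v - c *\<^sub>R w)"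
      by (rule envelope_le)
    also have "diff_quot (t / c) (c *\<^sub>R w) = c * diff_quot t w"
      using c by (simp add: diff_quot_def)
    also have "norm (c *\<^sub>R v - c *\<^sub>R w) = c * norm (v - w)"
      using c by (simp flip: scaleR_diff_right)
    also have "c * diff_quot t w + L * (c * norm (v - w)) = c * (diff_quot t w + L * norm (v - w))"
      by (simp add: algebra_simps)
    finally show ?thesis using c by (simp add: field_simps)
  qed
  then have "envelope (c *\<^sub>R v) / c \<le> envelope v" by (rule envelope_ge)
  then show ?thesis using c by (simp add: field_simps)
qed

lemma envelope_scale:
  assumes "0 < c"
  shows "envelope (c *\<^sub>R v) = c * envelope v"
proof -
  have "envelope v \<le> (1 / c) * envelope (c *\<^sub>R v)"
    using envelope_scale_le[of "1 / c" "c *\<^sub>R v"] assms by simp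
  then show ?thesis using envelope_scale_le[OF assms, of v] assms by (simp add: field_simps)
qed

lemma diff_quot_add:
  assumes "(t1, w1) \<in> finite_steps" and "(t2, w2) \<in> finite_steps"
  defines "t \<equiv> t1 * t2 / (t1 + t2)"
  shows "(t, w1 + w2) \<in> finite_steps" and "diff_quot t (w1 + w2) \<le> diff_quot t1 w1 + diff_quot t2 w2"
proof -
  from assms have t1: "0 < t1" and t2: "0 < t2"
    and fin: "f (z + t1 *\<^sub>R w1) \<noteq> \<infinity>" "f (z + t2 *\<^sub>R w2) \<noteq> \<infinity>" by (auto simp: finite_steps_def)
  obtain a1 where a1: "f (z + t1 *\<^sub>R w1) = ereal a1" using proper_ext_finiteE[OF proper fin(1)] .
  obtain a2 where a2: "f (z + t2 *\<^sub>R w2) = ereal a2" using proper_ext_finiteE[OF proper fin(2)] .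
  define \<theta> where "\<theta> = t2 / (t1 + t2)"
  have \<theta>: "0 \<le> \<theta>" "\<theta> \<le> 1" "\<theta> * t1 = t" "(1 - \<theta>) * t2 = t"
    using t1 t2 unfolding \<theta>_def t_def by (auto simp: field_simps)
  have "\<theta> *\<^sub>R (z + t1 *\<^sub>R w1) + (1 - \<theta>) *\<^sub>R (z + t2 *\<^sub>R w2)
      = z + (\<theta> * t1) *\<^sub>R w1 + ((1 - \<theta>) * t2) *\<^sub>R w2"
    by (simp add: algebra_simps)
  also have "\<dots> = z + t *\<^sub>R (w1 + w2)" using \<theta> by (simp add: scaleR_add_right)
  finally have "\<theta> *\<^sub>R (z + t1 *\<^sub>R w1) + (1 - \<theta>) *\<^sub>R (z + t2 *\<^sub>R w2) = z + t *\<^sub>R (w1 + w2)" .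
  then have le: "f (z + t *\<^sub>R (w1 + w2)) \<le> ereal (\<theta> * a1 + (1 - \<theta>) * a2)"
    using convex_ext_le_combination[OF convex a1 a2 \<theta>(1,2)] by simp
  then have fin_t: "f (z + t *\<^sub>R (w1 + w2)) \<noteq> \<infinity>" by auto
  then show "(t, w1 + w2) \<in> finite_steps" using t1 t2 by (simp add: finite_steps_def t_def)
  obtain b where b: "f (z + t *\<^sub>R (w1 + w2)) = ereal b" using proper_ext_finiteE[OF proper fin_t] .
  have "b \<le> \<theta> * a1 + (1 - \<theta>) * a2" using le b by simp
  moreover have "0 < t" using t1 t2 by (simp add: t_def)
  ultimately have "diff_quot t (w1 + w2) \<le> (\<theta> * a1 + (1 - \<theta>) * a2 - fz) / t"
    unfolding diff_quot_def b by (simp add: divide_right_mono)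
  also have "\<dots> = (a1 - fz) / t1 + (a2 - fz) / t2"
  proof -
    have "\<theta> / t = 1 / t1" "(1 - \<theta>) / t = 1 / t2" using \<theta> t1 t2 \<open>0 < t\<close> by (auto simp: field_simps)
    moreover have "(\<theta> * a1 + (1 - \<theta>) * a2 - fz) / t = \<theta> / t * (a1 - fz) + (1 - \<theta>) / t * (a2 - fz)"
      using \<open>0 < t\<close> by (simp add: field_simps)
    ultimately show ?thesis by simp
  qed
  finally show "diff_quot t (w1 + w2) \<le> diff_quot t1 w1 + diff_quot t2 w2"
    unfolding diff_quot_def a1 a2 by simp
qed

lemma envelope_add: "envelope (v1 + v2) \<le> envelope v1 + envelope v2"
proof -
  have sum: "envelope (v1 + v2) \<le> (diff_quot t1 w1 + L * norm (v1 - w1)) + (diff_quot t2 w2 + L * norm (v2 - w2))"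
    if tw1: "(t1, w1) \<in> finite_steps" and tw2: "(t2, w2) \<in> finite_steps" for t1 w1 t2 w2
  proof -
    have "norm ((v1 + v2) - (w1 + w2)) \<le> norm (v1 - w1) + norm (v2 - w2)"
      using norm_triangle_ineq[of "v1 - w1" "v2 - w2"] by (simp add: algebra_simps)
    then have "L * norm ((v1 + v2) - (w1 + w2)) \<le> L * norm (v1 - w1) + L * norm (v2 - w2)"
      using L_nonneg by (simp add: mult_left_mono flip: distrib_left)
    then show ?thesis
      using envelope_le[OF diff_quot_add(1)[OF tw1 tw2], of "v1 + v2"] diff_quot_add(2)[OF tw1 tw2]
      by simp
  qed
  have "envelope (v1 + v2) - (diff_quot t2 w2 + L * norm (v2 - w2)) \<le> envelope v1"
    if "(t2, w2) \<in> finite_steps" for t2 w2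
    using sum[OF _ that] by (intro envelope_ge) (simp add: algebra_simps)
  then have "envelope (v1 + v2) - envelope v1 \<le> envelope v2"
    by (intro envelope_ge) (simp add: algebra_simps)
  then show ?thesis by simp
qed

theorem subgradient_exists: "\<exists>s\<in>subdiff f z. norm s \<le> L"
proof -
  obtain s where "linear s" and s_le: "\<And>v. s v \<le> envelope v"
    using hahn_banach_sublinear[of envelope, OF envelope_add envelope_scale] by blast
  have s_bound: "norm (s v) \<le> L * norm v" for v
    using s_le[of v] s_le[of "- v"] envelope_upper[of v] envelope_upper[of "- v"]
      linear_neg[OF \<open>linear s\<close>, of v] by (simp add: abs_le_iff)
  then have "bounded_linear s"
    using \<open>linear s\<close> by (intro bounded_linear_intro[of _ L]) (auto simp: linear_add linear_scale mult.commute)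
  then have S: "blinfun_apply (Blinfun s) = s" by (rule bounded_linear_Blinfun_apply)
  have "f z + ereal (s (y - z)) \<le> f y" for y
  proof (cases "f y = \<infinity>")
    case False
    then obtain b where b: "f y = ereal b" using proper_ext_finiteE[OF proper] by blast
    have "s (y - z) \<le> b - fz" using s_le[of "y - z"] envelope_le_f[of "y - z"] b by simp
    then show ?thesis by (simp add: f_z b)
  qed simp
  then have "Blinfun s \<in> subdiff f z" using finite_at S by (simp add: subdiff_def)
  moreover have "norm (Blinfun s) \<le> L" using L_nonneg s_bound S by (intro norm_blinfun_bound) auto
  ultimately show ?thesis by blast
qed

end

lemma lipschitz_minorant_of_fplus_pow_slope:
  fixes f :: "'a::real_normed_vector \<Rightarrow> ereal"
  assumes proper: "proper_ext f" and convex: "convex_ext f"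
    and f_z: "f z = ereal b" and b: "0 < b" and q: "0 < q" "q \<le> 1" and k: "0 \<le> k"
    and slope: "\<And>y. ereal (b powr q) \<le> fplus_pow f q y + ereal (k * norm (y - z))"
  shows "f z - ereal (k / q * b powr (1 - q) * norm (y - z)) \<le> f y"
proof (cases "f y = \<infinity>")
  case False
  then obtain c where f_y: "f y = ereal c" using proper_ext_finiteE[OF proper] by blast
  define L where "L = k / q * b powr (1 - q)"
  have "b - L * norm (y - z) \<le> c"
  proof (cases "b \<le> c")
    case True
    have "0 \<le> L * norm (y - z)" using k q by (simp add: L_def)
    with True show ?thesis by linarith
  next
    case False
    define t where "t = min 1 (b / (b - c))"
    have t: "0 < t" "t \<le> 1" "t * (b - c) \<le> b"
      using False b by (auto simp: t_def min_def field_simps)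
    define zt where "zt = t *\<^sub>R y + (1 - t) *\<^sub>R z"
    have "f zt \<le> ereal (t * c + (1 - t) * b)"
      unfolding zt_def using t by (intro convex_ext_le_combination[OF convex f_y f_z]) auto
    then have "fplus_pow f q zt \<le> ereal ((b - t * (b - c)) powr q)"
      using t q by (intro fplus_pow_le[OF proper]) (simp_all add: algebra_simps)
    moreover have "zt - z = t *\<^sub>R (y - z)" by (simp add: zt_def algebra_simps)
    then have "norm (zt - z) = t * norm (y - z)" using t by simp
    ultimately have "ereal (b powr q) \<le> ereal ((b - t * (b - c)) powr q) + ereal (k * (t * norm (y - z)))"
      using slope[of zt] by (metis add_right_mono order_trans)
    then have decrease: "b powr q \<le> (b - t * (b - c)) powr q + k * (t * norm (y - z))" by simp
    have "b = b powr q * b powr (1 - q)" using b by (simp flip: powr_add)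
    also have "\<dots> \<le> ((b - t * (b - c)) powr q + k * (t * norm (y - z))) * b powr (1 - q)"
      using decrease by (rule mult_right_mono) simp
    also have "\<dots> = (b - t * (b - c)) powr q * b powr (1 - q) + t * (q * (L * norm (y - z)))"
      using q by (simp add: L_def algebra_simps)
    also have "\<dots> \<le> q * (b - t * (b - c)) + (1 - q) * b + t * (q * (L * norm (y - z)))"
      using weighted_am_gm_powr[of "b - t * (b - c)" b q] t b q by simp
    finally have "t * (q * (b - c)) \<le> t * (q * (L * norm (y - z)))" by (simp add: algebra_simps)
    then show ?thesis using t q by simp
  qed
  then show ?thesis by (simp add: f_z f_y L_def)
qed simp

lemma subgradient_of_fplus_pow_slope:
  fixes f :: "'a::real_normed_vector \<Rightarrow> ereal"
  assumes "proper_ext f" and "convex_ext f" and f_z: "f z = ereal b" and "0 < b"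
    and "0 < q" "q \<le> 1" and "0 \<le> k"
    and "\<And>y. ereal (b powr q) \<le> fplus_pow f q y + ereal (k * norm (y - z))"
  shows "\<exists>s\<in>subdiff f z. norm s \<le> k / q * b powr (1 - q)"
proof -
  interpret lipschitz_minorized f z "k / q * b powr (1 - q)"
    using assms lipschitz_minorant_of_fplus_pow_slope[OF assms(1,2) f_z assms(4-8)]
    by unfold_locales auto
  show ?thesis by (rule subgradient_exists)
qed

section \<open>Slopes and error bounds\<close>

lemma subdiff_infdist_bound:
  assumes s: "s \<in> subdiff f x" and f_x: "f x = ereal a" and nonempty: "sublevel0 f \<noteq> {}"
  shows "a \<le> norm s * infdist x (sublevel0 f)"
proof -
  have bound: "a \<le> norm s * dist x w" if w: "w \<in> sublevel0 f" for w
  proof -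
    have "f x + ereal (s (w - x)) \<le> f w" using s f_x by (auto simp: subdiff_def)
    also have "f w \<le> 0" using w by (simp add: sublevel0_def)
    finally have "a \<le> - s (w - x)" using f_x by simp
    also have "- s (w - x) = s (x - w)" by (simp add: blinfun.diff_right)
    also have "\<dots> \<le> norm s * norm (x - w)" using norm_blinfun[of s "x - w"] by simp
    finally show ?thesis by (simp add: dist_norm)
  qed
  show ?thesis
  proof (cases "norm s = 0")
    case True
    with bound nonempty show ?thesis by auto
  next
    case False
    then have "a / norm s \<le> infdist x (sublevel0 f)"
      unfolding infdist_notempty[OF nonempty] using bound
      by (intro cINF_greatest[OF nonempty]) (simp add: divide_le_eq mult.commute)
    with False show ?thesis by (simp add: divide_le_eq mult.commute)
  qed
qed

lemma dist0_subdiff_ge: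
  assumes "f x = ereal a" and "sublevel0 f \<noteq> {}" and "0 < infdist x (sublevel0 f)"
  shows "ereal (a / infdist x (sublevel0 f)) \<le> dist0_subdiff f x"
  unfolding dist0_subdiff_def
  using subdiff_infdist_bound[OF _ assms(1,2)] assms(3)
  by (intro INF_greatest) (simp add: divide_le_eq mult.commute)

lemma slopes_ge_of_error_bound:
  assumes proper: "proper_ext f" and closed: "closed (sublevel0 f)" and nonempty: "sublevel0 f \<noteq> {}"
    and q: "0 < q" and pos: "0 < f x"
    and bound: "ereal (\<tau> * infdist x (sublevel0 f)) \<le> fplus_pow f q x"
  shows "ereal \<tau> \<le> slope_ii f q x" and "ereal \<tau> \<le> slope_iii f q x"
proof -
  define d where "d = infdist x (sublevel0 f)"
  have "x \<notin> sublevel0 f" using pos by (simp add: sublevel0_def)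
  then have d: "0 < d" using infdist_pos_not_in_closed[OF closed nonempty] by (simp add: d_def)
  have "ereal \<tau> \<le> slope_ii f q x \<and> ereal \<tau> \<le> slope_iii f q x"
  proof (cases "f x = \<infinity>")
    case True
    then have "dist0_subdiff f x = \<infinity>" by (simp add: dist0_subdiff_def subdiff_def top_ereal_def)
    with True d show ?thesis by (simp add: slope_ii_def slope_iii_def epow_def flip: d_def)
  next
    case False
    then obtain a where a: "f x = ereal a" using proper_ext_finiteE[OF proper] by blast
    with pos have "0 < a" by simp
    have tau: "\<tau> \<le> a powr q / d" using bound a \<open>0 < a\<close> d by (simp add: fplus_pow_def field_simps flip: d_def)
    have D: "ereal (a / d) \<le> dist0_subdiff f x" using dist0_subdiff_ge[OF a nonempty] d by (simp add: d_def)
    have "ereal (a powr q / d) = ereal (a powr (q - 1)) * ereal (a / d)"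
      using \<open>0 < a\<close> by (simp add: powr_diff)
    also have "\<dots> \<le> ereal (a powr (q - 1)) * dist0_subdiff f x"
      using D by (rule ereal_mult_left_mono) simp
    also have "\<dots> = slope_ii f q x" using False a by (simp add: slope_ii_def)
    finally have ii: "ereal (a powr q / d) \<le> slope_ii f q x" .
    have "ereal (a powr q / d) \<le> slope_iii f q x"
    proof (cases "dist0_subdiff f x = \<infinity>")
      case True
      then show ?thesis using d by (simp add: slope_iii_def epow_def flip: d_def)
    next
      case False
      with D obtain r where r: "dist0_subdiff f x = ereal r" and "a / d \<le> r" by (cases "dist0_subdiff f x") auto
      then have "(a / d) powr q \<le> r powr q" using \<open>0 < a\<close> d q by (intro powr_mono2) auto
      then have "d powr (q - 1) * (a / d) powr q \<le> d powr (q - 1) * r powr q" by (simp add: mult_left_mono)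
      moreover have "d powr (q - 1) * (a / d) powr q = a powr q / d"
        using d \<open>0 < a\<close> by (intro powr_pred_mult_divide_powr) auto
      ultimately show ?thesis by (simp add: slope_iii_def epow_def r flip: d_def)
    qed
    with ii tau show ?thesis by (meson ereal_less_eq(3) order_trans)
  qed
  then show "ereal \<tau> \<le> slope_ii f q x" and "ereal \<tau> \<le> slope_iii f q x" by blast+
qed

lemma slopes_le_of_subgradient:
  assumes s: "s \<in> subdiff f z" and f_z: "f z = ereal b"
  shows "slope_ii f q z \<le> ereal (b powr (q - 1) * norm s)"
    and "0 < q \<Longrightarrow> slope_iii f q z \<le> ereal (infdist z (sublevel0 f) powr (q - 1) * norm s powr q)"
proof -
  have "dist0_subdiff f z \<le> ereal (norm s)" unfolding dist0_subdiff_def using s by (rule INF_lower)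
  moreover have "0 \<le> dist0_subdiff f z" unfolding dist0_subdiff_def by (rule INF_greatest) simp
  ultimately obtain r where r: "dist0_subdiff f z = ereal r" "0 \<le> r" "r \<le> norm s"
    by (cases "dist0_subdiff f z") auto
  then show "slope_ii f q z \<le> ereal (b powr (q - 1) * norm s)"
    by (simp add: slope_ii_def f_z mult_left_mono)
  assume "0 < q"
  with r have "r powr q \<le> norm s powr q" by (intro powr_mono2) auto
  then show "slope_iii f q z \<le> ereal (infdist z (sublevel0 f) powr (q - 1) * norm s powr q)"
    by (simp add: slope_iii_def epow_def r mult_left_mono)
qed

lemma fplus_pow_ekeland_point:
  fixes f :: "'a::banach \<Rightarrow> ereal"
  assumes proper: "proper_ext f" and lsc: "lsc_ext f" and q: "0 < q"
    and a: "f x = ereal a" "0 < a" and d: "0 < d"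
  obtains z b where "f z = ereal b" and "b \<le> a" and "dist z x \<le> d / 2"
    and "\<And>y. ereal (max b 0 powr q) \<le> fplus_pow f q y + ereal (2 * a powr q / d * norm (y - z))"
proof -
  define k where "k = 2 * a powr q / d"
  have k: "0 < k" using a d by (simp add: k_def)
  have F_x: "fplus_pow f q x = ereal (a powr q)" using a by (simp add: fplus_pow_def)
  have "ereal 0 \<le> fplus_pow f q y" for y by (simp add: fplus_pow_def)
  from ekeland_variational_principle_ereal[OF closed_sublevel_fplus_pow[OF lsc q] this k, where x = x]
  obtain z where z_x: "fplus_pow f q z + ereal (k * dist z x) \<le> fplus_pow f q x"
    and z_slope: "\<And>y. fplus_pow f q z \<le> fplus_pow f q y + ereal (k * dist y z)"
    using F_x by auto
  have "fplus_pow f q z \<noteq> \<infinity>" using z_x F_x by auto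
  then have "f z \<noteq> \<infinity>" by (auto simp: fplus_pow_def)
  then obtain b where b: "f z = ereal b" using proper_ext_finiteE[OF proper] by blast
  have F_z: "fplus_pow f q z = ereal (max b 0 powr q)" by (simp add: b fplus_pow_def)
  have "max b 0 powr q + k * dist z x \<le> a powr q" using z_x F_z F_x by simp
  then have "k * dist z x \<le> a powr q" and "max b 0 powr q \<le> a powr q"
    using k by (smt (verit) powr_ge_zero zero_le_dist mult_nonneg_nonneg)+
  then have "dist z x \<le> d / 2" and "b \<le> a"
    using a d q by (simp_all add: k_def field_simps powr_le_powr_iff)
  moreover have "ereal (max b 0 powr q) \<le> fplus_pow f q y + ereal (k * norm (y - z))" for y
    using z_slope[of y] F_z by (simp add: dist_norm)
  ultimately show ?thesis using that b unfolding k_def by blast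
qed

lemma small_slopes_near_error_bound_violation:
  fixes f :: "'a::banach \<Rightarrow> ereal"
  assumes proper: "proper_ext f" and convex: "convex_ext f" and lsc: "lsc_ext f"
    and q: "0 < q" "q \<le> 1" and \<eta>: "0 < \<eta>"
    and violation: "\<not> ereal (\<eta> * infdist x (sublevel0 f)) \<le> fplus_pow f q x"
  shows "\<exists>z. 0 < f z \<and> dist z x \<le> infdist x (sublevel0 f) / 2 \<and>
           slope_ii f q z \<le> ereal (2 * \<eta> / q) \<and> slope_iii f q z \<le> ereal (2 * \<eta> / q powr q)"
proof -
  define d where "d = infdist x (sublevel0 f)"
  have "f x \<noteq> \<infinity>" using violation by (auto simp: fplus_pow_def)
  then obtain a where a: "f x = ereal a" using proper_ext_finiteE[OF proper] by blast
  have violation': "max a 0 powr q < \<eta> * d" using violation by (simp add: a fplus_pow_def d_def)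
  then have d: "0 < d" using \<eta> by (smt (verit) powr_ge_zero zero_less_mult_iff infdist_nonneg d_def)
  then have "x \<notin> sublevel0 f" by (auto simp: d_def)
  then have "0 < a" using a by (simp add: sublevel0_def)
  with violation' have a_q: "a powr q < \<eta> * d" by simp
  define k where "k = 2 * a powr q / d"
  obtain z b where b: "f z = ereal b" and "b \<le> a" and dist_z: "dist z x \<le> d / 2"
    and slope: "\<And>y. ereal (max b 0 powr q) \<le> fplus_pow f q y + ereal (k * norm (y - z))"
    using fplus_pow_ekeland_point[OF proper lsc q(1) a \<open>0 < a\<close> d] unfolding k_def by blast
  define u where "u = infdist z (sublevel0 f)"
  have u: "d / 2 \<le> u" using infdist_triangle[of x "sublevel0 f" z] dist_z
    by (simp add: u_def d_def dist_commute)
  then have "z \<notin> sublevel0 f" using d by (auto simp: u_def)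
  then have "0 < b" using b by (simp add: sublevel0_def)
  with slope have "\<exists>s\<in>subdiff f z. norm s \<le> k / q * b powr (1 - q)"
    using \<open>0 < a\<close> d by (intro subgradient_of_fplus_pow_slope[OF proper convex b \<open>0 < b\<close> q]) (auto simp: k_def)
  then obtain s where s: "s \<in> subdiff f z" and s_le: "norm s \<le> k / q * b powr (1 - q)" by blast
  have "slope_ii f q z \<le> ereal (b powr (q - 1) * norm s)"
    using slopes_le_of_subgradient(1)[OF s b] .
  also have "b powr (q - 1) * norm s \<le> b powr (q - 1) * (k / q * b powr (1 - q))"
    using s_le by (rule mult_left_mono) simp
  also have "\<dots> = 2 * a powr q / (q * d)"
    using \<open>0 < b\<close> by (simp add: k_def field_simps flip: powr_add)
  also have "\<dots> \<le> 2 * \<eta> / q" using a_q d q by (simp add: field_simps)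
  finally have ii: "slope_ii f q z \<le> ereal (2 * \<eta> / q)" by simp
  have "b powr (1 - q) \<le> a powr (1 - q)" using \<open>0 < b\<close> \<open>b \<le> a\<close> q by (intro powr_mono2) auto
  with s_le have "norm s \<le> k / q * a powr (1 - q)"
    using \<open>0 < a\<close> d q by (smt (verit) k_def mult_left_mono divide_nonneg_pos powr_ge_zero)
  also have "\<dots> = (a / q) / (d / 2)" using \<open>0 < a\<close> by (simp add: k_def field_simps flip: powr_add)
  finally have s_le': "norm s \<le> (a / q) / (d / 2)" .
  have "slope_iii f q z \<le> ereal (u powr (q - 1) * norm s powr q)"
    using slopes_le_of_subgradient(2)[OF s b q(1)] by (simp add: u_def)
  also have "u powr (q - 1) * norm s powr q \<le> (d / 2) powr (q - 1) * ((a / q) / (d / 2)) powr q"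
    using u d q s_le' by (intro mult_mono powr_mono2' powr_mono2) auto
  also have "\<dots> = (a / q) powr q / (d / 2)"
    using d \<open>0 < a\<close> q by (intro powr_pred_mult_divide_powr) auto
  also have "\<dots> = 2 * a powr q / (q powr q * d)"
    using \<open>0 < a\<close> q by (simp add: powr_divide)
  also have "\<dots> \<le> 2 * \<eta> / q powr q" using a_q d q by (simp add: field_simps)
  finally have iii: "slope_iii f q z \<le> ereal (2 * \<eta> / q powr q)" by simp
  have "0 < f z" using b \<open>0 < b\<close> by simp
  with dist_z ii iii show ?thesis unfolding d_def by blast
qed

lemma Liminf_at_within_le_0:
  fixes h :: "'a::metric_space \<Rightarrow> ereal"
  assumes "\<And>\<epsilon> \<delta>. 0 < \<epsilon> \<Longrightarrow> 0 < \<delta> \<Longrightarrow> \<exists>z\<in>S - {a}. dist z a < \<delta> \<and> h z \<le> ereal \<epsilon>"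
  shows "Liminf (at a within S) h \<le> 0"
proof (rule ereal_le_epsilon2, rule ccontr)
  fix \<epsilon> :: real assume "0 < \<epsilon>" and "\<not> Liminf (at a within S) h \<le> 0 + ereal \<epsilon>"
  then have "eventually (\<lambda>z. ereal \<epsilon> < h z) (at a within S)" by (intro less_LiminfD) simp
  then obtain \<delta> where "0 < \<delta>" and "\<And>z. z \<in> S \<Longrightarrow> z \<noteq> a \<Longrightarrow> dist z a < \<delta> \<Longrightarrow> ereal \<epsilon> < h z"
    unfolding eventually_at by blast
  with assms[OF \<open>0 < \<epsilon>\<close> \<open>0 < \<delta>\<close>] show False by (auto simp: not_le[symmetric])
qed

lemma Liminf_slopes_pos_of_error_bound:
  fixes f :: "'a::real_normed_vector \<Rightarrow> ereal"
  assumes proper: "proper_ext f" and lsc: "lsc_ext f" and xbar: "xbar \<in> sublevel0 f" and q: "0 < q"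
    and "\<exists>\<tau>>0. \<exists>U. open U \<and> xbar \<in> U \<and>
           (\<forall>x\<in>U. ereal (\<tau> * infdist x (sublevel0 f)) \<le> fplus_pow f q x)"
  shows "0 < Liminf (at xbar within {x. 0 < f x}) (slope_ii f q)"
    and "0 < Liminf (at xbar within {x. 0 < f x}) (slope_iii f q)"
proof -
  let ?F = "at xbar within {x. 0 < f x}"
  obtain \<tau> U where \<tau>: "0 < \<tau>" and U: "open U" "xbar \<in> U"
    and bound: "\<And>x. x \<in> U \<Longrightarrow> ereal (\<tau> * infdist x (sublevel0 f)) \<le> fplus_pow f q x"
    using assms(5) by blast
  have closed: "closed (sublevel0 f)" using closed_sublevel_lsc[OF lsc] by (simp add: sublevel0_def)
  have nonempty: "sublevel0 f \<noteq> {}" using xbar by blast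
  have "eventually (\<lambda>x. x \<in> U \<and> 0 < f x) ?F"
    unfolding eventually_at_topological using U by blast
  then have "eventually (\<lambda>x. ereal \<tau> \<le> slope_ii f q x \<and> ereal \<tau> \<le> slope_iii f q x) ?F"
    by (rule eventually_mono) (use slopes_ge_of_error_bound[OF proper closed nonempty q] bound in blast)
  then have "ereal \<tau> \<le> Liminf ?F (slope_ii f q)" and "ereal \<tau> \<le> Liminf ?F (slope_iii f q)"
    by (auto intro: Liminf_bounded elim: eventually_mono)
  with \<tau> show "0 < Liminf ?F (slope_ii f q)" and "0 < Liminf ?F (slope_iii f q)"
    by (auto intro: less_le_trans[of 0 "ereal \<tau>"])
qed

lemma Liminf_slopes_nonpos_of_no_error_bound:
  fixes f :: "'a::banach \<Rightarrow> ereal"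
  assumes proper: "proper_ext f" and convex: "convex_ext f" and lsc: "lsc_ext f"
    and xbar: "xbar \<in> sublevel0 f" and q: "0 < q" "q \<le> 1"
    and no_bound: "\<not> (\<exists>\<tau>>0. \<exists>U. open U \<and> xbar \<in> U \<and>
           (\<forall>x\<in>U. ereal (\<tau> * infdist x (sublevel0 f)) \<le> fplus_pow f q x))"
  shows "Liminf (at xbar within {x. 0 < f x}) (slope_ii f q) \<le> 0"
    and "Liminf (at xbar within {x. 0 < f x}) (slope_iii f q) \<le> 0"
proof -
  have small: "\<exists>z\<in>{x. 0 < f x} - {xbar}. dist z xbar < \<delta> \<and>
      slope_ii f q z \<le> ereal \<epsilon> \<and> slope_iii f q z \<le> ereal \<epsilon>" if "0 < \<epsilon>" "0 < \<delta>" for \<epsilon> \<delta>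
  proof -
    define \<eta> where "\<eta> = \<epsilon> / 2 * min q (q powr q)"
    have \<eta>: "0 < \<eta>" "2 * \<eta> / q \<le> \<epsilon>" "2 * \<eta> / q powr q \<le> \<epsilon>"
      using that q by (auto simp: \<eta>_def field_simps min_def)
    obtain x where x: "dist xbar x < \<delta> / 2"
      and violation: "\<not> ereal (\<eta> * infdist x (sublevel0 f)) \<le> fplus_pow f q x"
      using no_bound \<eta>(1) \<open>0 < \<delta>\<close> by (metis open_ball centre_in_ball half_gt_zero mem_ball)
    obtain z where "0 < f z" and z_x: "dist z x \<le> infdist x (sublevel0 f) / 2"
      and slopes: "slope_ii f q z \<le> ereal (2 * \<eta> / q)" "slope_iii f q z \<le> ereal (2 * \<eta> / q powr q)"
      using small_slopes_near_error_bound_violation[OF proper convex lsc q \<eta>(1) violation] by blast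
    have "infdist x (sublevel0 f) \<le> dist x xbar" using xbar by (rule infdist_le)
    moreover have "dist z xbar \<le> dist x z + dist x xbar" by (rule dist_triangle3)
    ultimately have "dist z xbar < \<delta>" using z_x x dist_commute[of x z] dist_commute[of x xbar] zero_le_dist[of xbar x]
      by linarith
    moreover have "z \<noteq> xbar" using \<open>0 < f z\<close> xbar by (auto simp: sublevel0_def)
    moreover have "slope_ii f q z \<le> ereal \<epsilon>" "slope_iii f q z \<le> ereal \<epsilon>"
      using slopes \<eta> by (auto elim: order_trans)
    ultimately show ?thesis using \<open>0 < f z\<close> by blast
  qed
  show "Liminf (at xbar within {x. 0 < f x}) (slope_ii f q) \<le> 0"
    by (rule Liminf_at_within_le_0) (use small in blast)
  show "Liminf (at xbar within {x. 0 < f x}) (slope_iii f q) \<le> 0"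
    by (rule Liminf_at_within_le_0) (use small in blast)
qed

theorem corollary3p35:
  fixes f :: "'a::banach \<Rightarrow> ereal" and xbar :: 'a and q :: real
  assumes "proper_ext f" and "convex_ext f" and "lsc_ext f"
    and "xbar \<in> sublevel0 f"
    and "0 < q" and "q \<le> 1"
  shows "((\<exists>\<tau>>0. \<exists>U. open U \<and> xbar \<in> U \<and>
              (\<forall>x\<in>U. ereal (\<tau> * infdist x (sublevel0 f)) \<le> fplus_pow f q x))
          \<longleftrightarrow> 0 < Liminf (at xbar within {x. 0 < f x}) (slope_ii f q))
       \<and> (0 < Liminf (at xbar within {x. 0 < f x}) (slope_ii f q)
          \<longleftrightarrow> 0 < Liminf (at xbar within {x. 0 < f x}) (slope_iii f q))"
proof (cases "\<exists>\<tau>>0. \<exists>U. open U \<and> xbar \<in> U \<and>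
              (\<forall>x\<in>U. ereal (\<tau> * infdist x (sublevel0 f)) \<le> fplus_pow f q x)")
  case True
  then show ?thesis using Liminf_slopes_pos_of_error_bound[OF assms(1,3,4,5)] by blast
next
  case False
  then have "\<not> 0 < Liminf (at xbar within {x. 0 < f x}) (slope_ii f q)"
    and "\<not> 0 < Liminf (at xbar within {x. 0 < f x}) (slope_iii f q)"
    using Liminf_slopes_nonpos_of_no_error_bound[OF assms False] by (simp_all add: not_less)
  with False show ?thesis by blast
qed

end
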